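(* For every sufficiently large positive integer $C$ the following holds. Let $l_n=(n+C)^3$ for $n\in\{0,1,2,\dots\}$, and let $G=(V,E)$ be the comb graph with vertex set $V=\{(n,l)\in\mathbb{N}_0\times\mathbb{N}_0:\ l\le l_n\}$ and edges $(n,0)\sim(n+1,0)$ and $(n,l)\sim(n,l+1)$ (for all admissible $n,l$). Let $f(n,0)=1/l_n$ and $f(n,l)=0$ for $0<l<l_n$. Define $v:V\to\mathbb{R}$ by $v(0,0)=l_0\sum_{k=0}^\infty \frac1{l_k}$, $v(n,0)=v(n-1,0)+\sum_{k=n}^\infty\frac1{l_k}$ for $n\ge1$, and $v(n,l)=\frac{l_n-l}{l_n}v(n,0)$. Then $v$ is a bounded solution of \[ \begin{cases}\Delta_\infty v(n,l)=-f(n,l), & l<l_n,\\ v(n,l)=0, & l=l_n.\end{cases} \]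
   Context: $\mathbb{N}_0=\{0,1,2,\dots\}$. The discrete infinity Laplacian of $w:V\to\mathbb{R}$ is $\Delta_\infty w(x)=\inf_{y\sim x}w(y)+\sup_{y\sim x}w(y)-2w(x)$, where $y\sim x$ means $\{x,y\}\in E$. *)

theory Defs
  imports Complex_Main
begin

definition inf_laplacian :: "('a \<Rightarrow> 'a \<Rightarrow> bool) \<Rightarrow> ('a \<Rightarrow> real) \<Rightarrow> 'a \<Rightarrow> real" where
  "inf_laplacian adj w x = Inf (w ` {y. adj x y}) + Sup (w ` {y. adj x y}) - 2 * w x"

definition comb_l :: "nat \<Rightarrow> nat \<Rightarrow> nat" where
  "comb_l C n = (n + C) ^ 3"

definition comb_V :: "(nat \<Rightarrow> nat) \<Rightarrow> (nat \<times> nat) set" where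
  "comb_V L = {(n, l). l \<le> L n}"

definition comb_adj :: "(nat \<Rightarrow> nat) \<Rightarrow> nat \<times> nat \<Rightarrow> nat \<times> nat \<Rightarrow> bool" where
  "comb_adj L x y \<longleftrightarrow> x \<in> comb_V L \<and> y \<in> comb_V L \<and>
     ((snd x = 0 \<and> snd y = 0 \<and> (fst y = fst x + 1 \<or> fst x = fst y + 1)) \<or>
      (fst x = fst y \<and> (snd y = snd x + 1 \<or> snd x = snd y + 1)))"

definition comb_f :: "(nat \<Rightarrow> nat) \<Rightarrow> nat \<times> nat \<Rightarrow> real" where
  "comb_f L x = (if snd x = 0 then 1 / real (L (fst x)) else 0)"

end

theory Submission
  imports Defs "HOL-Analysis.Summation_Tests"
begin

(* Write s_n = sum_{k >= n} 1/l_k, so that s_n - s_{n+1} = 1/l_n and v(n,0) - v(n-1,0) = s_n.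
   On a tooth v is affine in l, so its infinity Laplacian vanishes there. At a spine vertex
   (n,0) the neighbours are ordered v(n-1,0) <= v(n,1) <= v(n+1,0) as soon as
   v(n,0) <= l_n s_n, and then the Laplacian is s_{n+1} - s_n = -1/l_n. That inequality
   propagates along the spine by induction as long as (l_{n+1} - l_n - 1) s_{n+1} >= 1, which
   for l_n = m^3 (m = n + C) follows from s_n >= 1/(3(m-1)m). Boundedness follows from
   v(n,0) = v(0,0) + s_1 + ... + s_n and s_n <= 1/(2(m-1)m). Both estimates of the tail are
   obtained by telescoping, and every C >= 1 works. *)

lemma summable_inverse_power_shift:
  assumes "p \<ge> 2"
  shows "summable (\<lambda>k. 1 / real ((k + m) ^ p))"
  using summable_ignore_initial_segment[OF inverse_power_summable[OF assms], of m]
  by (simp add: divide_inverse)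

lemma telescope_le_suminf:
  fixes a g :: "nat \<Rightarrow> real"
  assumes "summable a" and "g \<longlonglongrightarrow> 0" and "\<And>k. g k - g (Suc k) \<le> a k"
  shows "g 0 \<le> suminf a"
  using sums_le[OF assms(3) telescope_sums'[OF assms(2)] summable_sums[OF assms(1)]] by simp

lemma suminf_le_telescope:
  fixes a g :: "nat \<Rightarrow> real"
  assumes "summable a" and "g \<longlonglongrightarrow> 0" and "\<And>k. a k \<le> g k - g (Suc k)"
  shows "suminf a \<le> g 0"
  using sums_le[OF assms(3) summable_sums[OF assms(1)] telescope_sums'[OF assms(2)]] by simp

lemma LIMSEQ_inverse_consecutive_product:
  assumes "m \<ge> 1"
  shows "(\<lambda>k. 1 / (c * (real (k + m) - 1) * real (k + m))) \<longlonglongrightarrow> 0"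
proof -
  have "(\<lambda>k. inverse (real (k + (m - 1)))) \<longlonglongrightarrow> 0" and "(\<lambda>k. inverse (real (k + m))) \<longlonglongrightarrow> 0"
    by (intro LIMSEQ_ignore_initial_segment lim_inverse_n)+
  then have "(\<lambda>k. inverse c * inverse (real (k + (m - 1))) * inverse (real (k + m)))
      \<longlonglongrightarrow> inverse c * 0 * 0"
    by (intro tendsto_mult tendsto_const)
  then show ?thesis
    using assms by (simp add: of_nat_diff divide_inverse inverse_mult_distrib mult.assoc)
qed

lemma inverse_cube_tail_lower:
  assumes "m \<ge> 2"
  shows "1 / (3 * (real m - 1) * real m) \<le> (\<Sum>k. 1 / real ((k + m) ^ 3))"
proof -
  define g where "g k = 1 / (3 * (real (k + m) - 1) * real (k + m))" for k
  have "g \<longlonglongrightarrow> 0"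
    unfolding g_def using assms by (intro LIMSEQ_inverse_consecutive_product) simp
  moreover have "g k - g (Suc k) \<le> 1 / real ((k + m) ^ 3)" for k
  proof -
    define x where "x = real (k + m)"
    have x: "x \<ge> 2" using assms by (simp add: x_def)
    have "g k - g (Suc k) = 1 / (3 * (x - 1) * x) - 1 / (3 * x * (x + 1))"
      by (simp add: g_def x_def algebra_simps)
    also have "\<dots> = 2 / (3 * (x - 1) * x * (x + 1))"
      using x by (simp add: divide_simps)
    also have "\<dots> \<le> 1 / x ^ 3"
    proof -
      have "3 \<le> x\<^sup>2" using power_mono[OF x, of 2] by simp
      then show ?thesis
        using x by (simp add: field_simps) (simp add: algebra_simps power2_eq_square power3_eq_cube)
    qed
    finally show ?thesis by (simp add: x_def)
  qed
  ultimately have "g 0 \<le> (\<Sum>k. 1 / real ((k + m) ^ 3))"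
    by (intro telescope_le_suminf summable_inverse_power_shift) auto
  then show ?thesis by (simp add: g_def)
qed

lemma inverse_cube_tail_upper:
  assumes "m \<ge> 2"
  shows "(\<Sum>k. 1 / real ((k + m) ^ 3)) \<le> 1 / (2 * (real m - 1) * real m)"
proof -
  define g where "g k = 1 / (2 * (real (k + m) - 1) * real (k + m))" for k
  have "g \<longlonglongrightarrow> 0"
    unfolding g_def using assms by (intro LIMSEQ_inverse_consecutive_product) simp
  moreover have "1 / real ((k + m) ^ 3) \<le> g k - g (Suc k)" for k
  proof -
    define x where "x = real (k + m)"
    have x: "x \<ge> 2" using assms by (simp add: x_def)
    have "(x - 1) * x * (x + 1) \<le> x ^ 3"
      using x by (simp add: algebra_simps power3_eq_cube)
    then have "1 / x ^ 3 \<le> 1 / ((x - 1) * x * (x + 1))"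
      using x by (intro divide_left_mono) auto
    also have "\<dots> = 1 / (2 * (x - 1) * x) - 1 / (2 * x * (x + 1))"
      using x by (simp add: divide_simps)
    also have "\<dots> = g k - g (Suc k)"
      by (simp add: g_def x_def algebra_simps)
    finally show ?thesis by (simp add: x_def)
  qed
  ultimately have "(\<Sum>k. 1 / real ((k + m) ^ 3)) \<le> g 0"
    by (intro suminf_le_telescope summable_inverse_power_shift) auto
  then show ?thesis by (simp add: g_def)
qed

lemma inf_laplacian_two_neighbours:
  assumes "{y. adj x y} = {a, b}"
  shows "inf_laplacian adj w x = w a + w b - 2 * w x"
  using assms by (simp add: inf_laplacian_def cInf_insert cSup_insert inf_real_def sup_real_def)

lemma inf_laplacian_three_neighbours:
  assumes "{y. adj x y} = {a, b, c}" and "w a \<le> w c" and "w c \<le> w b"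
  shows "inf_laplacian adj w x = w a + w b - 2 * w x"
  using assms by (simp add: inf_laplacian_def cInf_insert cSup_insert inf_real_def sup_real_def)

lemma comb_neighbours_tooth:
  assumes "0 < l" and "l < L n"
  shows "{y. comb_adj L (n, l) y} = {(n, l - 1), (n, l + 1)}"
  using assms unfolding comb_adj_def comb_V_def by auto

lemma comb_neighbours_origin:
  assumes "0 < L 0"
  shows "{y. comb_adj L (0, 0) y} = {(1, 0), (0, 1)}"
  using assms unfolding comb_adj_def comb_V_def by auto

lemma comb_neighbours_spine:
  assumes "0 < L (Suc n)"
  shows "{y. comb_adj L (Suc n, 0) y} = {(n, 0), (Suc (Suc n), 0), (Suc n, 1)}"
  using assms unfolding comb_adj_def comb_V_def by auto

definition inverse_tail :: "(nat \<Rightarrow> nat) \<Rightarrow> nat \<Rightarrow> real" where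
  "inverse_tail L n = (\<Sum>k. 1 / real (L (k + n)))"

locale comb_profile =
  fixes L :: "nat \<Rightarrow> nat" and v :: "nat \<times> nat \<Rightarrow> real"
  assumes L_pos: "\<And>n. 0 < L n"
    and summable_inverse_L: "summable (\<lambda>k. 1 / real (L k))"
    and v_origin: "v (0, 0) = real (L 0) * inverse_tail L 0"
    and v_spine: "\<And>n. v (Suc n, 0) = v (n, 0) + inverse_tail L (Suc n)"
    and v_tooth: "\<And>n l. l \<le> L n \<Longrightarrow> v (n, l) = (real (L n) - real l) / real (L n) * v (n, 0)"
begin

lemma inverse_tail_Suc: "inverse_tail L n = 1 / real (L n) + inverse_tail L (Suc n)"
proof -
  have "summable (\<lambda>k. 1 / real (L (k + n)))"
    using summable_ignore_initial_segment[OF summable_inverse_L] .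
  from suminf_split_head[OF this] show ?thesis
    by (simp add: inverse_tail_def)
qed

lemma inverse_tail_pos: "0 < inverse_tail L n"
  unfolding inverse_tail_def
  using summable_ignore_initial_segment[OF summable_inverse_L] L_pos by (intro suminf_pos) auto

lemma v_spine_nonneg: "0 \<le> v (n, 0)"
proof (induction n)
  case 0
  show ?case using v_origin L_pos[of 0] inverse_tail_pos[of 0] by simp
next
  case (Suc n)
  then show ?case using v_spine[of n] inverse_tail_pos[of "Suc n"] by simp
qed

lemma v_tooth_end: "v (n, L n) = 0"
  using v_tooth[of "L n" n] by simp

lemma v_tooth_one: "v (n, 1) = v (n, 0) - v (n, 0) / real (L n)"
  using v_tooth[of 1 n] L_pos[of n] by (simp add: field_simps)

lemma laplacian_tooth:
  assumes "0 < l" and "l < L n"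
  shows "inf_laplacian (comb_adj L) v (n, l) = 0"
proof -
  have "inf_laplacian (comb_adj L) v (n, l) = v (n, l - 1) + v (n, l + 1) - 2 * v (n, l)"
    using assms by (intro inf_laplacian_two_neighbours comb_neighbours_tooth)
  also have "\<dots> = 0"
  proof -
    have "v (n, l - 1) = (real (L n) - real l + 1) / real (L n) * v (n, 0)"
      using assms v_tooth[of "l - 1" n] by (simp add: of_nat_diff)
    moreover have "v (n, l + 1) = (real (L n) - real l - 1) / real (L n) * v (n, 0)"
      using assms v_tooth[of "l + 1" n] by simp
    moreover have "v (n, l) = (real (L n) - real l) / real (L n) * v (n, 0)"
      using assms v_tooth[of l n] by simp
    ultimately show ?thesis
      using L_pos[of n] by (simp only:) (simp add: field_simps)
  qed
  finally show ?thesis .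
qed

lemma laplacian_origin: "inf_laplacian (comb_adj L) v (0, 0) = - 1 / real (L 0)"
proof -
  have "inf_laplacian (comb_adj L) v (0, 0) = v (1, 0) + v (0, 1) - 2 * v (0, 0)"
    using comb_neighbours_origin[of L, OF L_pos] by (rule inf_laplacian_two_neighbours)
  also have "\<dots> = inverse_tail L 1 - inverse_tail L 0"
    using v_spine[of 0] v_tooth_one[of 0] v_origin L_pos[of 0] by simp
  also have "\<dots> = - 1 / real (L 0)"
    using inverse_tail_Suc[of 0] by simp
  finally show ?thesis .
qed

lemma laplacian_spine:
  assumes "v (Suc n, 0) \<le> real (L (Suc n)) * inverse_tail L (Suc n)"
  shows "inf_laplacian (comb_adj L) v (Suc n, 0) = - 1 / real (L (Suc n))"
proof -
  have "v (Suc n, 0) / real (L (Suc n)) \<le> inverse_tail L (Suc n)"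
    using assms L_pos[of "Suc n"] by (simp add: divide_simps mult.commute)
  then have "v (n, 0) \<le> v (Suc n, 1)"
    using v_spine[of n] v_tooth_one[of "Suc n"] by linarith
  moreover have "v (Suc n, 1) \<le> v (Suc (Suc n), 0)"
  proof -
    have "0 \<le> v (Suc n, 0) / real (L (Suc n))"
      using v_spine_nonneg[of "Suc n"] by simp
    then show ?thesis
      using v_spine[of "Suc n"] v_tooth_one[of "Suc n"] inverse_tail_pos[of "Suc (Suc n)"] by simp
  qed
  moreover have "{y. comb_adj L (Suc n, 0) y} = {(n, 0), (Suc (Suc n), 0), (Suc n, 1)}"
    using L_pos by (rule comb_neighbours_spine)
  ultimately have "inf_laplacian (comb_adj L) v (Suc n, 0)
      = v (n, 0) + v (Suc (Suc n), 0) - 2 * v (Suc n, 0)"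
    by (intro inf_laplacian_three_neighbours)
  also have "\<dots> = inverse_tail L (Suc (Suc n)) - inverse_tail L (Suc n)"
    using v_spine[of n] v_spine[of "Suc n"] by simp
  also have "\<dots> = - 1 / real (L (Suc n))"
    using inverse_tail_Suc[of "Suc n"] by simp
  finally show ?thesis .
qed

lemma v_spine_le_length_times_tail:
  assumes growth: "\<And>n. 1 \<le> (real (L (Suc n)) - real (L n) - 1) * inverse_tail L (Suc n)"
  shows "v (n, 0) \<le> real (L n) * inverse_tail L n"
proof (induction n)
  case 0
  show ?case using v_origin by simp
next
  case (Suc n)
  have "v (Suc n, 0) = v (n, 0) + inverse_tail L (Suc n)"
    by (rule v_spine)
  also have "\<dots> \<le> real (L n) * inverse_tail L n + inverse_tail L (Suc n)"
    using Suc.IH by simp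
  also have "\<dots> = 1 + (real (L n) + 1) * inverse_tail L (Suc n)"
    using inverse_tail_Suc[of n] L_pos[of n] by (simp add: algebra_simps)
  also have "\<dots> \<le> real (L (Suc n)) * inverse_tail L (Suc n)"
    using growth[of n] by (simp add: algebra_simps)
  finally show ?case .
qed

lemma laplacian_eq_neg_f:
  assumes growth: "\<And>n. 1 \<le> (real (L (Suc n)) - real (L n) - 1) * inverse_tail L (Suc n)"
    and "l < L n"
  shows "inf_laplacian (comb_adj L) v (n, l) = - comb_f L (n, l)"
proof (cases "l = 0")
  case True
  show ?thesis
  proof (cases n)
    case 0
    then show ?thesis using True laplacian_origin by (simp add: comb_f_def)
  next
    case (Suc m)
    then show ?thesis
      using True laplacian_spine[OF v_spine_le_length_times_tail[OF growth]] by (simp add: comb_f_def)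
  qed
next
  case False
  then show ?thesis using laplacian_tooth assms(2) by (simp add: comb_f_def)
qed

lemma v_spine_eq_sum: "v (n, 0) = v (0, 0) + (\<Sum>j<n. inverse_tail L (Suc j))"
  by (induction n) (simp_all add: v_spine)

lemma abs_v_le_spine:
  assumes "l \<le> L n"
  shows "\<bar>v (n, l)\<bar> \<le> v (n, 0)"
proof -
  define t where "t = (real (L n) - real l) / real (L n)"
  have t: "0 \<le> t" "t \<le> 1"
    using assms L_pos[of n] by (simp_all add: t_def divide_simps)
  have "v (n, l) = t * v (n, 0)"
    unfolding t_def by (rule v_tooth[OF assms])
  then have "\<bar>v (n, l)\<bar> = t * v (n, 0)"
    using mult_nonneg_nonneg[OF t(1) v_spine_nonneg[of n]] by simp
  also have "\<dots> \<le> v (n, 0)"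
    using mult_left_le_one_le[OF v_spine_nonneg t] .
  finally show ?thesis .
qed

lemma abs_v_bounded:
  assumes "summable (\<lambda>j. inverse_tail L (Suc j))" and "x \<in> comb_V L"
  shows "\<bar>v x\<bar> \<le> v (0, 0) + (\<Sum>j. inverse_tail L (Suc j))"
proof -
  obtain n l where x: "x = (n, l)" and l: "l \<le> L n"
    using assms(2) by (auto simp: comb_V_def)
  have "\<bar>v x\<bar> \<le> v (0, 0) + (\<Sum>j<n. inverse_tail L (Suc j))"
    using abs_v_le_spine[OF l] v_spine_eq_sum[of n] x by simp
  also have "(\<Sum>j<n. inverse_tail L (Suc j)) \<le> (\<Sum>j. inverse_tail L (Suc j))"
    using assms(1) inverse_tail_pos by (intro sum_le_suminf) (auto intro: less_imp_le)
  finally show ?thesis by simp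
qed

lemma solves_dirichlet_problem:
  assumes growth: "\<And>n. 1 \<le> (real (L (Suc n)) - real (L n) - 1) * inverse_tail L (Suc n)"
    and summable_tail: "summable (\<lambda>j. inverse_tail L (Suc j))"
  shows "(\<exists>M. \<forall>x \<in> comb_V L. \<bar>v x\<bar> \<le> M) \<and>
    (\<forall>n l. (n, l) \<in> comb_V L \<and> l < L n \<longrightarrow>
       inf_laplacian (comb_adj L) v (n, l) = - comb_f L (n, l)) \<and>
    (\<forall>n l. (n, l) \<in> comb_V L \<and> l = L n \<longrightarrow> v (n, l) = 0)"
proof (intro conjI allI impI)
  show "\<exists>M. \<forall>x \<in> comb_V L. \<bar>v x\<bar> \<le> M"
    using abs_v_bounded[OF summable_tail] by blast
  show "inf_laplacian (comb_adj L) v (n, l) = - comb_f L (n, l)"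
    if "(n, l) \<in> comb_V L \<and> l < L n" for n l
    using laplacian_eq_neg_f[OF growth] that by blast
  show "v (n, l) = 0" if "(n, l) \<in> comb_V L \<and> l = L n" for n l
    using v_tooth_end that by blast
qed

end

lemma inverse_tail_comb_l: "inverse_tail (comb_l C) n = (\<Sum>k. 1 / real ((k + (n + C)) ^ 3))"
  by (simp add: inverse_tail_def comb_l_def add.assoc)

lemma comb_l_growth:
  assumes "0 < C"
  shows "1 \<le> (real (comb_l C (Suc n)) - real (comb_l C n) - 1) * inverse_tail (comb_l C) (Suc n)"
proof -
  define m where "m = Suc n + C"
  have m: "m \<ge> 2" using assms by (simp add: m_def)
  have "real (comb_l C (Suc n)) - real (comb_l C n) - 1 = 3 * (real m - 1) * real m"
    by (simp add: comb_l_def m_def algebra_simps power3_eq_cube)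
  moreover have "1 / (3 * (real m - 1) * real m) \<le> inverse_tail (comb_l C) (Suc n)"
    using inverse_cube_tail_lower[OF m] by (simp add: inverse_tail_comb_l m_def)
  moreover have "0 < 3 * (real m - 1) * real m" using m by simp
  ultimately show ?thesis by (simp add: pos_divide_le_eq mult.commute)
qed

lemma summable_comb_l_tail:
  assumes "0 < C"
  shows "summable (\<lambda>j. inverse_tail (comb_l C) (Suc j))"
proof (rule summable_comparison_test')
  show "summable (\<lambda>j. 1 / real ((j + Suc C) ^ 2))"
    by (rule summable_inverse_power_shift) simp
next
  fix j
  define m where "m = Suc j + C"
  have m: "m \<ge> 2" using assms by (simp add: m_def)
  have tail: "inverse_tail (comb_l C) (Suc j) = (\<Sum>k. 1 / real ((k + m) ^ 3))"
    by (simp add: inverse_tail_comb_l m_def)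
  have "0 \<le> 1 / (3 * (real m - 1) * real m)"
    using m by simp
  then have "0 \<le> inverse_tail (comb_l C) (Suc j)"
    using inverse_cube_tail_lower[OF m] unfolding tail by linarith
  then have "norm (inverse_tail (comb_l C) (Suc j)) = inverse_tail (comb_l C) (Suc j)" by simp
  also have "\<dots> \<le> 1 / (2 * (real m - 1) * real m)"
    unfolding tail by (rule inverse_cube_tail_upper[OF m])
  also have "\<dots> \<le> 1 / real m ^ 2"
  proof (rule divide_left_mono)
    have "2 * real m \<le> real m * real m"
      using m by (intro mult_right_mono) auto
    then show "real m ^ 2 \<le> 2 * (real m - 1) * real m"
      by (simp add: power2_eq_square algebra_simps)
  qed (use m in auto)
  finally show "norm (inverse_tail (comb_l C) (Suc j)) \<le> 1 / real ((j + Suc C) ^ 2)"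
    by (simp add: m_def)
qed

lemma comb_l_solves_dirichlet_problem:
  fixes v :: "nat \<times> nat \<Rightarrow> real"
  assumes C: "0 < C"
    and v_origin: "v (0, 0) = real (comb_l C 0) * (\<Sum>k. 1 / real (comb_l C k))"
    and v_spine: "\<forall>n\<ge>1. v (n, 0) = v (n - 1, 0) + (\<Sum>k. 1 / real (comb_l C (k + n)))"
    and v_tooth: "\<forall>n l. l \<le> comb_l C n \<longrightarrow>
          v (n, l) = (real (comb_l C n) - real l) / real (comb_l C n) * v (n, 0)"
  shows "(\<exists>M. \<forall>x \<in> comb_V (comb_l C). \<bar>v x\<bar> \<le> M) \<and>
    (\<forall>n l. (n, l) \<in> comb_V (comb_l C) \<and> l < comb_l C n \<longrightarrow>
       inf_laplacian (comb_adj (comb_l C)) v (n, l) = - comb_f (comb_l C) (n, l)) \<and>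
    (\<forall>n l. (n, l) \<in> comb_V (comb_l C) \<and> l = comb_l C n \<longrightarrow> v (n, l) = 0)"
proof -
  interpret comb_profile "comb_l C" v
  proof
    show "0 < comb_l C n" for n
      using C by (simp add: comb_l_def)
    show "summable (\<lambda>k. 1 / real (comb_l C k))"
      using summable_inverse_power_shift[of 3 C] by (simp add: comb_l_def)
    show "v (0, 0) = real (comb_l C 0) * inverse_tail (comb_l C) 0"
      using v_origin by (simp add: inverse_tail_def)
    show "v (Suc n, 0) = v (n, 0) + inverse_tail (comb_l C) (Suc n)" for n
      using v_spine[rule_format, of "Suc n"] by (simp add: inverse_tail_def)
    show "v (n, l) = (real (comb_l C n) - real l) / real (comb_l C n) * v (n, 0)"
      if "l \<le> comb_l C n" for n l
      using v_tooth that by blast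
  qed
  show ?thesis
    by (rule solves_dirichlet_problem[OF comb_l_growth[OF C] summable_comb_l_tail[OF C]])
qed

theorem proposition4p5:
  shows "\<exists>C0::nat. \<forall>C::nat. C \<ge> C0 \<and> C > 0 \<longrightarrow>
    (\<forall>v :: nat \<times> nat \<Rightarrow> real.
       v (0, 0) = real (comb_l C 0) * (\<Sum>k. 1 / real (comb_l C k)) \<and>
       (\<forall>n\<ge>1. v (n, 0) = v (n - 1, 0) + (\<Sum>k. 1 / real (comb_l C (k + n)))) \<and>
       (\<forall>n l. l \<le> comb_l C n \<longrightarrow>
          v (n, l) = (real (comb_l C n) - real l) / real (comb_l C n) * v (n, 0))
       \<longrightarrow>
       (\<exists>M. \<forall>x \<in> comb_V (comb_l C). \<bar>v x\<bar> \<le> M) \<and>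
       (\<forall>n l. (n, l) \<in> comb_V (comb_l C) \<and> l < comb_l C n \<longrightarrow>
          inf_laplacian (comb_adj (comb_l C)) v (n, l) = - comb_f (comb_l C) (n, l)) \<and>
       (\<forall>n l. (n, l) \<in> comb_V (comb_l C) \<and> l = comb_l C n \<longrightarrow> v (n, l) = 0))"
  using comb_l_solves_dirichlet_problem by (intro exI[of _ 0]) blast

end
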